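(* Let $s$ be a Thiele scoring function with $s(2)-s(1)<s(1)$. Then the query function $g$ of the sequential Thiele rule induced by $s$, namely $g(A,k,(c_1,\dots,c_\ell))=\arg\max_{x\in C\setminus\{c_1,\dots,c_\ell\}}\hat s(A,\{x,c_1,\dots,c_\ell\})$, is standard, continuous and concurring.
   Context: Candidates form a finite set $C$, $|C|=m>1$. An approval profile $A$ has a nonempty finite voter set $N_A$, each $i\in N_A$ having a nonempty ballot $A_i\subseteq C$; $N_A(c)=\{i\in N_A:c\in A_i\}$, $n=|N_A|$. For profiles $A,A'$ and $\lambda\in\mathbb N$, $\lambda A+A'$ is the profile containing $\lambda$ copies of each voter of $A$ plus a copy of each voter of $A'$. A Thiele scoring function is $s:\mathbb N_0\to\mathbb Q$ with $s(0)=0$, $s(1)>0$, $s$ nondecreasing and concave ($s(x+1)-s(x)\ge s(x+2)-s(x+1)$); $\hat s(A,W)=\sum_{i\in N_A}s(|A_i\cap W|)$. $\mathcal S(C)$ is the set of non-repeating candidate sequences of length at most $m-2$. Axioms on a query function $g$ (mapping $(A,k,S)$, $S=(c_1,\dots,c_\ell)\in\mathcal S(C)$, to a subset of $C\setminus\{c_1,\dots,c_\ell\}$): (Continuity) for all $A,A',k,S$, $g(\lambda A+A',k,S)\subseteq g(A,k,S)$ for all sufficiently large $\lambda$. (Standardness) $g(A,k,\emptyset)$ is the set of candidates maximizing $|N_A(c)|$. (Concurrence) for every profile $A$ with $|A_i|\le2$ for all $i$ and $|N_A(c)|=|N_A(d)|\le n/k$ for all $c,d\in C$, every $(c_1,\dots,c_\ell)\in\mathcal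 S(C)$, and all $c,d\in C\setminus\{c_1,\dots,c_\ell\}$ with $|\{i:A_i=\{c_j,d\}\}|\ge|\{i:A_i=\{c_j,c\}\}|$ for all $j\le\ell$, at least one strictly, we have $d\notin g(A,k,(c_1,\dots,c_\ell))$. *)

theory Defs
  imports Complex_Main "HOL-Library.Multiset"
begin

(* A profile is a nonempty finite multiset of nonempty ballots (subsets of C);
   each element of the multiset is one voter's ballot.
   Then lambda A + A' is  repeat_mset lambda A + A'. *)

definition thiele_scoring :: "(nat \<Rightarrow> rat) \<Rightarrow> bool" where
  "thiele_scoring s \<longleftrightarrow> s 0 = 0 \<and> s 1 > 0 \<and> (\<forall>x. s x \<le> s (Suc x))
     \<and> (\<forall>x. s (Suc x) - s x \<ge> s (Suc (Suc x)) - s (Suc x))"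

definition profile :: "'c set \<Rightarrow> 'c set multiset \<Rightarrow> bool" where
  "profile C A \<longleftrightarrow> A \<noteq> {#} \<and> (\<forall>B \<in># A. B \<noteq> {} \<and> B \<subseteq> C)"

definition approvals :: "'c set multiset \<Rightarrow> 'c \<Rightarrow> nat" where
  "approvals A c = size (filter_mset (\<lambda>B. c \<in> B) A)"

definition thiele_score :: "(nat \<Rightarrow> rat) \<Rightarrow> 'c set multiset \<Rightarrow> 'c set \<Rightarrow> rat" where
  "thiele_score s A W = (\<Sum>B \<in># A. s (card (B \<inter> W)))"

definition seqs :: "'c set \<Rightarrow> 'c list set" where
  "seqs C = {S. distinct S \<and> set S \<subseteq> C \<and> length S \<le> card C - 2}"

(* query function of the sequential Thiele rule (independent of k) *)
definition seq_thiele_query ::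
  "(nat \<Rightarrow> rat) \<Rightarrow> 'c set \<Rightarrow> 'c set multiset \<Rightarrow> nat \<Rightarrow> 'c list \<Rightarrow> 'c set" where
  "seq_thiele_query s C A k S =
     {x \<in> C - set S. \<forall>y \<in> C - set S.
        thiele_score s A (insert y (set S)) \<le> thiele_score s A (insert x (set S))}"

type_synonym 'c query = "'c set multiset \<Rightarrow> nat \<Rightarrow> 'c list \<Rightarrow> 'c set"

definition query_continuous :: "'c set \<Rightarrow> 'c query \<Rightarrow> bool" where
  "query_continuous C g \<longleftrightarrow>
     (\<forall>A A' k S. profile C A \<longrightarrow> profile C A' \<longrightarrow> k \<ge> 1 \<longrightarrow> S \<in> seqs C \<longrightarrow>
        (\<exists>l0. \<forall>l\<ge>l0. l \<ge> 1 \<longrightarrow> g (repeat_mset l A + A') k S \<subseteq> g A k S))"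

definition query_standard :: "'c set \<Rightarrow> 'c query \<Rightarrow> bool" where
  "query_standard C g \<longleftrightarrow>
     (\<forall>A k. profile C A \<longrightarrow> k \<ge> 1 \<longrightarrow>
        g A k [] = {c \<in> C. \<forall>d \<in> C. approvals A d \<le> approvals A c})"

definition pair_count :: "'c set multiset \<Rightarrow> 'c \<Rightarrow> 'c \<Rightarrow> nat" where
  "pair_count A x y = count A {x, y}"

definition query_concurring :: "'c set \<Rightarrow> 'c query \<Rightarrow> bool" where
  "query_concurring C g \<longleftrightarrow>
     (\<forall>A k S c d. profile C A \<longrightarrow> k \<ge> 1 \<longrightarrow>
        (\<forall>B \<in># A. card B \<le> 2) \<longrightarrow>
        (\<forall>x \<in> C. \<forall>y \<in> C. approvals A x = approvals A y
                 \<and> real (approvals A x) \<le> real (size A) / real k) \<longrightarrow>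
        S \<in> seqs C \<longrightarrow> c \<in> C - set S \<longrightarrow> d \<in> C - set S \<longrightarrow>
        (\<forall>cj \<in> set S. pair_count A cj d \<ge> pair_count A cj c) \<longrightarrow>
        (\<exists>cj \<in> set S. pair_count A cj d > pair_count A cj c) \<longrightarrow>
        d \<notin> g A k S)"

end

theory Submission
  imports Defs
begin

text \<open>The score of a committee is additive in the profile, so on \<open>\<lambda>A + A'\<close> the sequential
  Thiele rule maximises \<open>\<lambda> \<hat>s(A,\<cdot>) + \<hat>s(A',\<cdot>)\<close>; for large \<open>\<lambda>\<close> every strict preference of \<open>A\<close>
  wins, which gives continuity. With \<open>S = []\<close> the score of \<open>{x}\<close> is \<open>s(1)|N_A(x)|\<close>, which gives
  standardness. When all ballots have at most two candidates, adding \<open>x \<notin> S\<close> to \<open>S\<close> raises the score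
  by \<open>s(1)|N_A(x)| - (2s(1) - s(2)) \<Sum>\<^sub>j #{i. A\<^sub>i = {x, c\<^sub>j}}\<close>; since \<open>2s(1) - s(2) > 0\<close>, among
  candidates with equal approval counts the one sharing more ballots with \<open>S\<close> scores strictly
  less, which gives concurrence.\<close>

lemma thiele_score_empty [simp]: "thiele_score s {#} W = 0"
  by (simp add: thiele_score_def)

lemma thiele_score_add_mset [simp]:
  "thiele_score s (add_mset B A) W = s (card (B \<inter> W)) + thiele_score s A W"
  by (simp add: thiele_score_def)

lemma thiele_score_union: "thiele_score s (A + A') W = thiele_score s A W + thiele_score s A' W"
  by (simp add: thiele_score_def)

lemma thiele_score_repeat_mset: "thiele_score s (repeat_mset l A) W = of_nat l * thiele_score s A W"
  by (induction l) (simp_all add: thiele_score_union algebra_simps)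

lemma approvals_add_mset [simp]:
  "approvals (add_mset B A) x = approvals A x + (if x \<in> B then 1 else 0)"
  by (simp add: approvals_def)

lemma thiele_score_singleton:
  assumes "s 0 = 0"
  shows "thiele_score s A {y} = s 1 * of_nat (approvals A y)"
proof (induction A)
  case empty
  then show ?case by (simp add: approvals_def)
next
  case (add B A)
  have "card (B \<inter> {y}) = (if y \<in> B then 1 else 0)" by auto
  with add assms show ?case by (simp add: algebra_simps)
qed

lemma ballot_score_insert:
  fixes s :: "nat \<Rightarrow> rat"
  assumes "s 0 = 0" "finite T" "x \<notin> T" "finite B" "card B \<le> 2"
  shows "s (card (B \<inter> insert x T)) = s (card (B \<inter> T)) + (if x \<in> B then s 1 else 0)
     - (2 * s 1 - s 2) * (\<Sum>cj\<in>T. if B = {x, cj} then 1 else 0)"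
proof (cases "x \<in> B")
  case False
  then have "B \<inter> insert x T = B \<inter> T" by auto
  moreover have "(\<Sum>cj\<in>T. if B = {x, cj} then 1 else (0::rat)) = 0"
    using False by (intro sum.neutral) auto
  ultimately show ?thesis using False by simp
next
  case True
  have card_insert: "card (B \<inter> insert x T) = Suc (card (B \<inter> T))"
    using True assms by (simp add: Int_insert_right card_insert_if)
  show ?thesis
  proof (cases "B \<inter> T = {}")
    case True2: True
    have "(\<Sum>cj\<in>T. if B = {x, cj} then 1 else (0::rat)) = 0"
      using True2 by (intro sum.neutral) auto
    with card_insert True2 True assms(1) show ?thesis by simp
  next
    case False
    then obtain y where y: "y \<in> B" "y \<in> T" by auto
    have "x \<noteq> y" using y assms(3) by auto
    have "{x, y} \<subseteq> B" using y True by auto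
    moreover have "card {x, y} = 2" using \<open>x \<noteq> y\<close> by simp
    ultimately have B_eq: "B = {x, y}"
      using card_subset_eq[OF assms(4)] assms(5) card_mono[OF assms(4)] by (metis le_antisym)
    have "(\<Sum>cj\<in>T. if B = {x, cj} then 1 else (0::rat)) = (\<Sum>cj\<in>T. if cj = y then 1 else 0)"
      using B_eq \<open>x \<noteq> y\<close> assms(3) by (intro sum.cong) (auto simp: doubleton_eq_iff)
    also have "\<dots> = 1" using y assms(2) by simp
    finally have pairs: "(\<Sum>cj\<in>T. if B = {x, cj} then 1 else (0::rat)) = 1" .
    have "B \<inter> T = {y}" using B_eq y assms(3) by auto
    with card_insert pairs True show ?thesis by (simp add: numeral_2_eq_2)
  qed
qed

lemma thiele_score_insert:
  fixes s :: "nat \<Rightarrow> rat"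
  assumes "s 0 = 0" "finite T" "x \<notin> T" "\<forall>B\<in>#A. finite B \<and> card B \<le> 2"
  shows "thiele_score s A (insert x T) = thiele_score s A T + s 1 * of_nat (approvals A x)
     - (2 * s 1 - s 2) * (\<Sum>cj\<in>T. of_nat (count A {x, cj}))"
  using assms(4)
proof (induction A)
  case empty
  then show ?case by (simp add: approvals_def)
next
  case (add B A)
  have ballot: "s (card (B \<inter> insert x T)) = s (card (B \<inter> T)) + (if x \<in> B then s 1 else 0)
     - (2 * s 1 - s 2) * (\<Sum>cj\<in>T. if B = {x, cj} then 1 else 0)"
    using ballot_score_insert[of s T x B] assms add.prems by simp
  have counts: "(\<Sum>cj\<in>T. of_nat (count (add_mset B A) {x, cj})) =
     (\<Sum>cj\<in>T. of_nat (count A {x, cj})) + (\<Sum>cj\<in>T. if B = {x, cj} then 1 else (0::rat))"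
    by (auto simp: sum.distrib[symmetric] intro!: sum.cong)
  have IH: "thiele_score s A (insert x T) = thiele_score s A T + s 1 * of_nat (approvals A x)
     - (2 * s 1 - s 2) * (\<Sum>cj\<in>T. of_nat (count A {x, cj}))"
    using add by simp
  show ?case
    unfolding thiele_score_add_mset approvals_add_mset of_nat_add counts ballot IH
    by (cases "x \<in> B") (simp_all add: algebra_simps)
qed

lemma eventually_argmax_subset_dominant:
  fixes f g :: "'a \<Rightarrow> 'b::archimedean_field"
  assumes "finite R"
  shows "\<exists>l0. \<forall>l\<ge>l0. {x\<in>R. \<forall>y\<in>R. of_nat l * f y + g y \<le> of_nat l * f x + g x}
                     \<subseteq> {x\<in>R. \<forall>y\<in>R. f y \<le> f x}"
proof -
  have pair: "eventually (\<lambda>l. f x < f y \<longrightarrow> of_nat l * f x + g x < of_nat l * f y + g y) sequentially"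
    for x y
  proof (cases "f x < f y")
    case True
    then obtain n where n: "g x - g y < of_nat n * (f y - f x)"
      using ex_less_of_nat_mult[of "f y - f x"] by auto
    have "of_nat l * f x + g x < of_nat l * f y + g y" if "n \<le> l" for l
    proof -
      have "of_nat n * (f y - f x) \<le> of_nat l * (f y - f x)"
        using True that by (intro mult_right_mono) auto
      with n show ?thesis by (simp add: algebra_simps)
    qed
    then show ?thesis
      unfolding eventually_sequentially by blast
  qed simp
  have "eventually (\<lambda>l. \<forall>x\<in>R. \<forall>y\<in>R. f x < f y \<longrightarrow>
      of_nat l * f x + g x < of_nat l * f y + g y) sequentially"
    using assms pair by (simp add: eventually_ball_finite)
  then obtain l0 where l0: "\<And>l x y. l \<ge> l0 \<Longrightarrow> x \<in> R \<Longrightarrow> y \<in> R \<Longrightarrow> f x < f y \<Longrightarrow>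
      of_nat l * f x + g x < of_nat l * f y + g y"
    unfolding eventually_sequentially by blast
  show ?thesis
  proof (intro exI allI impI subsetI)
    fix l x
    assume "l0 \<le> l" "x \<in> {x\<in>R. \<forall>y\<in>R. of_nat l * f y + g y \<le> of_nat l * f x + g x}"
    then show "x \<in> {x\<in>R. \<forall>y\<in>R. f y \<le> f x}"
      using l0 by (force simp: not_le[symmetric])
  qed
qed

lemma seq_thiele_query_standard:
  assumes "s 0 = 0" "s 1 > 0"
  shows "query_standard C (seq_thiele_query s C)"
  using assms by (simp add: query_standard_def seq_thiele_query_def thiele_score_singleton)

lemma seq_thiele_query_continuous:
  assumes "finite C"
  shows "query_continuous C (seq_thiele_query s C)"
  unfolding query_continuous_def
proof (intro allI impI)
  fix A A' :: "'a set multiset" and k and S :: "'a list"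
  let ?score = "\<lambda>M y. thiele_score s M (insert y (set S))"
  obtain l0 where "\<forall>l\<ge>l0.
      {x\<in>C - set S. \<forall>y\<in>C - set S. of_nat l * ?score A y + ?score A' y \<le> of_nat l * ?score A x + ?score A' x}
      \<subseteq> {x\<in>C - set S. \<forall>y\<in>C - set S. ?score A y \<le> ?score A x}"
    using eventually_argmax_subset_dominant[of "C - set S" "?score A" "?score A'"] assms by blast
  then show "\<exists>l0. \<forall>l\<ge>l0. l \<ge> 1 \<longrightarrow>
      seq_thiele_query s C (repeat_mset l A + A') k S \<subseteq> seq_thiele_query s C A k S"
    by (simp add: seq_thiele_query_def thiele_score_union thiele_score_repeat_mset) blast
qed

lemma seq_thiele_query_concurring:
  assumes "finite C" "s 0 = 0" "s 2 - s 1 < s 1"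
  shows "query_concurring C (seq_thiele_query s C)"
  unfolding query_concurring_def
proof (intro allI impI)
  fix A :: "'a set multiset" and k and S :: "'a list" and c d
  assume "profile C A" and small: "\<forall>B\<in>#A. card B \<le> 2"
    and equal: "\<forall>x\<in>C. \<forall>y\<in>C. approvals A x = approvals A y \<and> real (approvals A x) \<le> real (size A) / real k"
    and c: "c \<in> C - set S" and d: "d \<in> C - set S"
    and ge: "\<forall>cj\<in>set S. pair_count A cj c \<le> pair_count A cj d"
    and gt: "\<exists>cj\<in>set S. pair_count A cj c < pair_count A cj d"
  have ballots: "\<forall>B\<in>#A. finite B \<and> card B \<le> 2"
    using \<open>profile C A\<close> small assms(1) unfolding profile_def by (auto intro: finite_subset)
  have "approvals A c = approvals A d" using equal c d by auto
  moreover have "(\<Sum>cj\<in>set S. (of_nat (count A {c, cj})::rat)) < (\<Sum>cj\<in>set S. of_nat (count A {d, cj}))"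
    using ge gt unfolding pair_count_def
    by (intro sum_strict_mono_ex1) (auto simp: insert_commute)
  ultimately have "thiele_score s A (insert d (set S)) < thiele_score s A (insert c (set S))"
    using thiele_score_insert[of s "set S" c A] thiele_score_insert[of s "set S" d A]
      assms(2,3) c d ballots by simp
  then show "d \<notin> seq_thiele_query s C A k S"
    using c unfolding seq_thiele_query_def by force
qed

theorem mainTheorem4:
  fixes s :: "nat \<Rightarrow> rat" and C :: "'c set"
  assumes "finite C" and "card C > 1"
    and "thiele_scoring s" and "s 2 - s 1 < s 1"
  shows "query_standard C (seq_thiele_query s C)
       \<and> query_continuous C (seq_thiele_query s C)
       \<and> query_concurring C (seq_thiele_query s C)"
proof -
  have "s 0 = 0" "s 1 > 0"
    using assms(3) unfolding thiele_scoring_def by auto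
  then show ?thesis
    using seq_thiele_query_standard seq_thiele_query_continuous seq_thiele_query_concurring
      assms(1,4) by blast
qed

end
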